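(* Assume $\mu_1=\mu_2=\mu_3=1$. For any decision points, every point of every periodic orbit of the triangle process lies in ${}^VA$.
   Context: Fix $\rho_1,\rho_2,\rho_3\in(0,1)$ with $\rho_1+\rho_2+\rho_3>1$, $\lambda_i=\rho_i$, $\mu_i=1$, $\theta:=\rho_1+\rho_2+\rho_3-1$. $A_i^0:=\{y\in\mathbb R^3: y_1+y_2+y_3=1, y_i=0, y_l\ge0\}$, $A^0:=\bigcup_iA_i^0$. For $z\in A^0\setminus A_j^0$, $f_j(z):=\sum_{i\neq j}\frac{(1-\rho_j)z_i+\rho_i z_j}{(1-\rho_j)+\theta z_j}e_i$. For $(\hat i,\hat j,\hat k)$ equal to $(1,2,3)$ or a cyclic permutation, $(1-x)e_{\hat j}+xe_{\hat k}\in A^0_{\hat i}$ is written $(x,\hat i)$. ${}^VA_{\hat i}:=\{(x,\hat i):\max(0,1-\rho_{\hat j}/\theta)\le x\le\min(1,\rho_{\hat k}/\theta)\}$, ${}^VA:=\bigcup_{\hat i}{}^VA_{\hat i}$. Decision points $d_1,d_2,d_3\in(0,1)$; switching rule $\mathfrak R((x,\hat i))=\hat j$ if $x<d_{\hat i}$, $\hat k$ if $x>d_{\hat i}$, both allowed if $x=d_{\hat i}$; $\varphi(z):=f_{\mathfrak R(z)}(z)$ (two-valued at decision points). A periodic orbit is $u_1,\dots,u_m\in A^0$ with $u_{n+1}\in\varphi(u_n)$ for $n<m$ and $u_1\in\varphi(u_m)$. *)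

theory Defs
  imports "HOL-Analysis.Analysis"
begin

text \<open>Points of R^3 are vectors of type real^3; the index type 3 is cyclic
  (arithmetic mod 3), so for an index i the cyclic successors are i+1 and i+2,
  i.e. (i,j,k) = (i, i+1, i+2) runs over (1,2,3) and its cyclic permutations.
  The service rates mu_i are all 1 and lambda_i = rho_i, as in the context.\<close>

definition unitv :: "3 \<Rightarrow> real^3" where
  "unitv i = axis i 1"

definition theta :: "real^3 \<Rightarrow> real" where
  "theta \<rho> = (\<Sum>i\<in>UNIV. \<rho>$i) - 1"

definition A0i :: "3 \<Rightarrow> (real^3) set" where
  "A0i i = {y. (\<Sum>l\<in>UNIV. y$l) = 1 \<and> y$i = 0 \<and> (\<forall>l. 0 \<le> y$l)}"

definition A0 :: "(real^3) set" where
  "A0 = (\<Union>i. A0i i)"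

definition fmap :: "real^3 \<Rightarrow> 3 \<Rightarrow> real^3 \<Rightarrow> real^3" where
  "fmap \<rho> j z = (\<Sum>i\<in>UNIV - {j}.
     (((1 - \<rho>$j) * z$i + \<rho>$i * z$j) / ((1 - \<rho>$j) + theta \<rho> * z$j)) *\<^sub>R unitv i)"

text \<open>The point (x, i) := (1-x) e_(i+1) + x e_(i+2) of A0_i.\<close>
definition edge_pt :: "real \<Rightarrow> 3 \<Rightarrow> real^3" where
  "edge_pt x i = (1 - x) *\<^sub>R unitv (i + 1) + x *\<^sub>R unitv (i + 2)"

definition VAi :: "real^3 \<Rightarrow> 3 \<Rightarrow> (real^3) set" where
  "VAi \<rho> i = {edge_pt x i | x.
      max 0 (1 - \<rho>$(i+1) / theta \<rho>) \<le> x \<and> x \<le> min 1 (\<rho>$(i+2) / theta \<rho>)}"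

definition VA :: "real^3 \<Rightarrow> (real^3) set" where
  "VA \<rho> = (\<Union>i. VAi \<rho> i)"

text \<open>Two-valued map phi: w \<in> phi(z) iff z = (x,i) and, according to the switching
  rule with decision points d, w = f_(i+1)(z) (if x \<le> d_i) or w = f_(i+2)(z)
  (if x \<ge> d_i); at x = d_i both are allowed.\<close>
definition phi_step :: "real^3 \<Rightarrow> real^3 \<Rightarrow> real^3 \<Rightarrow> real^3 \<Rightarrow> bool" where
  "phi_step \<rho> d z w \<longleftrightarrow> (\<exists>i x. 0 \<le> x \<and> x \<le> 1 \<and> z = edge_pt x i \<and>
      ((x \<le> d$i \<and> w = fmap \<rho> (i + 1) z) \<or> (d$i \<le> x \<and> w = fmap \<rho> (i + 2) z)))"

definition periodic_orbit :: "real^3 \<Rightarrow> real^3 \<Rightarrow> nat \<Rightarrow> (nat \<Rightarrow> real^3) \<Rightarrow> bool" where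
  "periodic_orbit \<rho> d m u \<longleftrightarrow> 1 \<le> m \<and> (\<forall>n\<in>{1..m}. u n \<in> A0) \<and>
      (\<forall>n\<in>{1..<m}. phi_step \<rho> d (u n) (u (n + 1))) \<and> phi_step \<rho> d (u m) (u 1)"

end

theory Submission
  imports Defs
begin

text \<open>The potential is the excess E(z) = max(0, max_l (\<theta> z_l - \<rho>_l)).
  Off coordinate j the map f_j multiplies the vector \<theta> z - \<rho> by
  (1 - \<rho>_j) / (1 - \<rho>_j + \<theta> z_j), and it sets coordinate j to -\<rho>_j < 0.
  The switching rule only applies f_j when z_j > 0, so every step of \<phi> strictly
  decreases E unless the new value is 0. Around a periodic orbit E therefore
  vanishes, and on A0 the condition E = 0 says exactly that the point lies in VA.\<close>

lemma cyclic_succ_distinct: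
  fixes i :: 3
  shows "i + 1 \<noteq> i" "i + 2 \<noteq> i" "i + 1 \<noteq> i + 2"
  using exhaust_3[of i] by auto

lemma exhaust_3_cyclic:
  fixes i l :: 3
  shows "l = i \<or> l = i + 1 \<or> l = i + 2"
  using exhaust_3[of i] exhaust_3[of l] by auto

lemma sum_UNIV_3_cyclic: "(\<Sum>l\<in>UNIV. (y :: real^3) $ l) = y$i + y$(i + 1) + y$(i + 2)"
proof -
  have UNIV_eq: "(UNIV :: 3 set) = {i, i + 1, i + 2}"
    using exhaust_3_cyclic[of _ i] by blast
  show ?thesis
    by (subst UNIV_eq) (simp add: cyclic_succ_distinct)
qed

lemma unitv_nth: "unitv i $ l = (if l = i then 1 else 0)"
  by (simp add: unitv_def axis_def)

lemma edge_pt_nth: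
  "edge_pt x i $ l = (if l = i + 1 then 1 - x else 0) + (if l = i + 2 then x else 0)"
  by (simp add: edge_pt_def unitv_nth)

lemma fmap_nth:
  "fmap \<rho> j z $ l = (if l = j then 0 else
     ((1 - \<rho>$j) * z$l + \<rho>$l * z$j) / ((1 - \<rho>$j) + theta \<rho> * z$j))"
  by (simp add: fmap_def unitv_nth if_distrib cong: if_cong)

lemma A0i_eq_edge_pt:
  assumes "z \<in> A0i i"
  shows "z = edge_pt (z$(i + 2)) i" "0 \<le> z$(i + 2)" "z$(i + 2) \<le> 1"
proof -
  have z: "z$i = 0" "\<forall>l. 0 \<le> z$l" "z$(i + 1) + z$(i + 2) = 1"
    using assms sum_UNIV_3_cyclic[of z i] by (auto simp: A0i_def)
  have "z$l = edge_pt (z$(i + 2)) i $ l" for l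
    using exhaust_3_cyclic[of l i] z(1,3) by (auto simp: edge_pt_nth cyclic_succ_distinct)
  then show "z = edge_pt (z$(i + 2)) i"
    unfolding vec_eq_iff by blast
  show "0 \<le> z$(i + 2)" "z$(i + 2) \<le> 1"
    using z(2)[rule_format, of "i + 1"] z(2)[rule_format, of "i + 2"] z(3) by linarith+
qed

lemma phi_step_fmap:
  assumes "\<forall>i. 0 < d$i \<and> d$i < 1" and "phi_step \<rho> d z w"
  obtains j where "0 < z$j" "w = fmap \<rho> j z"
proof -
  obtain i x where "z = edge_pt x i"
    and step: "(x \<le> d$i \<and> w = fmap \<rho> (i + 1) z) \<or> (d$i \<le> x \<and> w = fmap \<rho> (i + 2) z)"
    using assms(2) unfolding phi_step_def by blast
  then have coords: "z$(i + 1) = 1 - x" "z$(i + 2) = x"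
    by (simp_all add: edge_pt_nth cyclic_succ_distinct)
  have d: "0 < d$i" "d$i < 1"
    using assms(1) by auto
  from step show ?thesis
  proof (elim disjE conjE)
    assume "x \<le> d$i" "w = fmap \<rho> (i + 1) z"
    then show ?thesis
      using that[of "i + 1"] coords(1) d(2) by simp
  next
    assume "d$i \<le> x" "w = fmap \<rho> (i + 2) z"
    then show ?thesis
      using that[of "i + 2"] coords(2) d(1) by simp
  qed
qed

definition excess :: "real^3 \<Rightarrow> real^3 \<Rightarrow> real" where
  "excess \<rho> z = Max (insert 0 (range (\<lambda>l. theta \<rho> * z$l - \<rho>$l)))"

lemma excess_nonneg: "0 \<le> excess \<rho> z"
  unfolding excess_def by simp

lemma excess_ge: "theta \<rho> * z$l - \<rho>$l \<le> excess \<rho> z"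
  unfolding excess_def by (rule Max_ge) auto

lemma excess_le: "0 \<le> B \<Longrightarrow> (\<And>l. theta \<rho> * z$l - \<rho>$l \<le> B) \<Longrightarrow> excess \<rho> z \<le> B"
  unfolding excess_def by (subst Max_le_iff) auto

lemma excess_eq_0_iff: "excess \<rho> z = 0 \<longleftrightarrow> (\<forall>l. theta \<rho> * z$l \<le> \<rho>$l)"
  using excess_le[of 0 \<rho> z] excess_ge[of \<rho> z] excess_nonneg[of \<rho> z] by force

lemma theta_fmap_diff_eq:
  assumes "l \<noteq> j" and "(1 - \<rho>$j) + theta \<rho> * z$j \<noteq> 0"
  shows "theta \<rho> * fmap \<rho> j z $ l - \<rho>$l
    = (1 - \<rho>$j) / ((1 - \<rho>$j) + theta \<rho> * z$j) * (theta \<rho> * z$l - \<rho>$l)"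
  using assms by (simp add: fmap_nth field_simps)

lemma excess_fmap_contracts:
  assumes "0 < \<rho>$j" "\<rho>$j < 1" "0 < theta \<rho>" "0 < z$j"
  defines "c \<equiv> (1 - \<rho>$j) / ((1 - \<rho>$j) + theta \<rho> * z$j)"
  shows "0 \<le> c" "c < 1" "excess \<rho> (fmap \<rho> j z) \<le> c * excess \<rho> z"
proof -
  have D: "1 - \<rho>$j < (1 - \<rho>$j) + theta \<rho> * z$j"
    using assms by simp
  moreover have "0 < 1 - \<rho>$j"
    using assms(2) by simp
  ultimately show c: "0 \<le> c" "c < 1"
    unfolding c_def by (simp_all add: field_simps)
  show "excess \<rho> (fmap \<rho> j z) \<le> c * excess \<rho> z"
  proof (rule excess_le)
    show nonneg: "0 \<le> c * excess \<rho> z"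
      using c excess_nonneg by simp
    fix l
    show "theta \<rho> * fmap \<rho> j z $ l - \<rho>$l \<le> c * excess \<rho> z"
    proof (cases "l = j")
      case True
      then show ?thesis
        using nonneg assms(1) by (simp add: fmap_nth)
    next
      case False
      then have "theta \<rho> * fmap \<rho> j z $ l - \<rho>$l = c * (theta \<rho> * z$l - \<rho>$l)"
        unfolding c_def using D assms(2) by (intro theta_fmap_diff_eq) auto
      also have "\<dots> \<le> c * excess \<rho> z"
        by (rule mult_left_mono[OF excess_ge c(1)])
      finally show ?thesis .
    qed
  qed
qed

lemma excess_phi_step:
  assumes "\<forall>i. 0 < \<rho>$i \<and> \<rho>$i < 1" "0 < theta \<rho>" "\<forall>i. 0 < d$i \<and> d$i < 1"
    and "phi_step \<rho> d z w"
  shows "excess \<rho> w = 0 \<or> excess \<rho> w < excess \<rho> z"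
proof -
  obtain j where j: "0 < z$j" "w = fmap \<rho> j z"
    using phi_step_fmap[OF assms(3,4)] by blast
  have "0 < \<rho>$j" "\<rho>$j < 1"
    using assms(1) by auto
  then obtain c where c: "0 \<le> c" "c < 1" "excess \<rho> w \<le> c * excess \<rho> z"
    using excess_fmap_contracts[OF _ _ assms(2) j(1)] j(2) by metis
  show ?thesis
  proof (cases "excess \<rho> z = 0")
    case True
    then show ?thesis
      using c(3) excess_nonneg[of \<rho> w] by simp
  next
    case False
    then have "c * excess \<rho> z < excess \<rho> z"
      using c(2) excess_nonneg[of \<rho> z] by simp
    then show ?thesis
      using c(3) by simp
  qed
qed

text \<open>A maximiser of V on the cycle would have a predecessor with strictly larger V.\<close>
lemma cycle_potential_vanishes:
  fixes V :: "'a \<Rightarrow> real" and m :: nat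
  assumes decr: "\<And>z w. R z w \<Longrightarrow> V w = 0 \<or> V w < V z"
    and nonneg: "\<And>z. 0 \<le> V z"
    and "1 \<le> m" "\<forall>n\<in>{1..<m}. R (u n) (u (n + 1))" "R (u m) (u 1)"
  shows "\<forall>n\<in>{1..m}. V (u n) = 0"
proof (rule ccontr)
  assume "\<not> ?thesis"
  then obtain k where "k \<in> {1..m}" "V (u k) \<noteq> 0"
    by blast
  have "Max ((V \<circ> u) ` {1..m}) \<in> (V \<circ> u) ` {1..m}"
    using \<open>1 \<le> m\<close> by (intro Max_in finite_imageI) auto
  then obtain n where n: "n \<in> {1..m}" "V (u n) = Max ((V \<circ> u) ` {1..m})"
    by auto
  then have max: "V (u k) \<le> V (u n)" if "k \<in> {1..m}" for k
    using that by simp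
  have pos: "0 < V (u n)"
    using \<open>k \<in> {1..m}\<close> \<open>V (u k) \<noteq> 0\<close> max[of k] nonneg[of "u k"] by linarith
  define p where "p = (if n = 1 then m else n - 1)"
  have "p \<in> {1..m}"
    using n assms(3) by (auto simp: p_def)
  have "R (u p) (u n)"
  proof (cases "n = 1")
    case True
    then show ?thesis
      using assms(5) by (simp add: p_def)
  next
    case False
    then have "n - 1 \<in> {1..<m}" "n - 1 + 1 = n"
      using n by auto
    then show ?thesis
      using assms(4) False by (metis p_def)
  qed
  then show False
    using decr[of "u p" "u n"] max[OF \<open>p \<in> {1..m}\<close>] pos by linarith
qed

lemma A0_in_VA:
  assumes "0 < theta \<rho>" "z \<in> A0" "\<forall>l. theta \<rho> * z$l \<le> \<rho>$l"
  shows "z \<in> VA \<rho>"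
proof -
  obtain i where "z \<in> A0i i"
    using assms(2) unfolding A0_def by blast
  define x where "x = z$(i + 2)"
  have z: "z = edge_pt x i" "0 \<le> x" "x \<le> 1"
    using A0i_eq_edge_pt[OF \<open>z \<in> A0i i\<close>] unfolding x_def by auto
  have "theta \<rho> * x \<le> \<rho>$(i + 2)" "theta \<rho> * (1 - x) \<le> \<rho>$(i + 1)"
    using assms(3)[rule_format, of "i + 2"] assms(3)[rule_format, of "i + 1"] z(1)
    by (simp_all add: edge_pt_nth cyclic_succ_distinct)
  then have "1 - \<rho>$(i + 1) / theta \<rho> \<le> x" "x \<le> \<rho>$(i + 2) / theta \<rho>"
    using assms(1) by (simp_all add: field_simps)
  then have "z \<in> VAi \<rho> i"
    unfolding VAi_def using z by auto
  then show ?thesis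
    unfolding VA_def by blast
qed

theorem lemma4p4:
  fixes \<rho> d :: "real^3" and m :: nat and u :: "nat \<Rightarrow> real^3"
  assumes "\<forall>i. 0 < \<rho>$i \<and> \<rho>$i < 1"
    and "(\<Sum>i\<in>UNIV. \<rho>$i) > 1"
    and "\<forall>i. 0 < d$i \<and> d$i < 1"
    and "periodic_orbit \<rho> d m u"
  shows "\<forall>n\<in>{1..m}. u n \<in> VA \<rho>"
proof -
  have theta: "0 < theta \<rho>"
    using assms(2) unfolding theta_def by simp
  have orbit: "1 \<le> m" "\<forall>n\<in>{1..m}. u n \<in> A0"
    "\<forall>n\<in>{1..<m}. phi_step \<rho> d (u n) (u (n + 1))" "phi_step \<rho> d (u m) (u 1)"
    using assms(4) unfolding periodic_orbit_def by auto
  have step: "excess \<rho> w = 0 \<or> excess \<rho> w < excess \<rho> z" if "phi_step \<rho> d z w" for z w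
    using excess_phi_step[OF assms(1) theta assms(3) that] .
  have "\<forall>n\<in>{1..m}. excess \<rho> (u n) = 0"
    using cycle_potential_vanishes[where R = "phi_step \<rho> d" and V = "excess \<rho>",
        OF step excess_nonneg orbit(1,3,4)] .
  then show ?thesis
    using A0_in_VA[OF theta] orbit(2) by (simp add: excess_eq_0_iff)
qed

end
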